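(* ($\mathrm{ZFCU}_R$) Let $\kappa$ be an infinite cardinal. Assume the DC$_\kappa$-scheme holds and the class $\mathcal{A}$ of urelements is a proper class. Then $\kappa$ is realized.
   Context: $\mathrm{ZFCU}_R$ is ZFC with urelements (language $\{\in,\mathcal{A}\}$, $\mathcal{A}$ the urelement predicate), formulated with Replacement rather than Collection, with AC. "$\mathcal{A}$ is a proper class" means there is no set whose members are exactly the urelements. A set is realized if it is equinumerous with some set of urelements. DC$_\kappa$-scheme: for every formula $\varphi$ and parameter $u$, if $\forall x\exists y\varphi(x,y,u)$ then there is a function $f$ with domain $\kappa$ such that $\varphi(f\restriction\alpha,f(\alpha),u)$ for all $\alpha<\kappa$. *)

theory Defs
  imports Main
begin

text \<open>A structure is a type 'a (the universe) with a membership relation E and an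
urelement predicate U.  First-order formulas of the language {\<in>, A} use
de Bruijn indices; an environment is a function nat \<Rightarrow> 'a.\<close>

datatype fm = Mem nat nat | Equ nat nat | Ur nat | Neg fm | Conj fm fm | Ex fm

primrec sat :: "('a \<Rightarrow> 'a \<Rightarrow> bool) \<Rightarrow> ('a \<Rightarrow> bool) \<Rightarrow> (nat \<Rightarrow> 'a) \<Rightarrow> fm \<Rightarrow> bool" where
  "sat E U s (Mem i j) = E (s i) (s j)"
| "sat E U s (Equ i j) = (s i = s j)"
| "sat E U s (Ur i) = U (s i)"
| "sat E U s (Neg \<phi>) = (\<not> sat E U s \<phi>)"
| "sat E U s (Conj \<phi> \<psi>) = (sat E U s \<phi> \<and> sat E U s \<psi>)"
| "sat E U s (Ex \<phi>) = (\<exists>a. sat E U (case_nat a s) \<phi>)"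

definition isSet :: "('a \<Rightarrow> bool) \<Rightarrow> 'a \<Rightarrow> bool" where
  "isSet U x \<longleftrightarrow> \<not> U x"

definition is_upair :: "('a \<Rightarrow> 'a \<Rightarrow> bool) \<Rightarrow> ('a \<Rightarrow> bool) \<Rightarrow> 'a \<Rightarrow> 'a \<Rightarrow> 'a \<Rightarrow> bool" where
  "is_upair E U x a b \<longleftrightarrow> isSet U x \<and> (\<forall>z. E z x \<longleftrightarrow> z = a \<or> z = b)"

definition is_opair :: "('a \<Rightarrow> 'a \<Rightarrow> bool) \<Rightarrow> ('a \<Rightarrow> bool) \<Rightarrow> 'a \<Rightarrow> 'a \<Rightarrow> 'a \<Rightarrow> bool" where
  "is_opair E U p a b \<longleftrightarrow> isSet U p \<and> (\<forall>z. E z p \<longleftrightarrow> is_upair E U z a a \<or> is_upair E U z a b)"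

definition rel :: "('a \<Rightarrow> 'a \<Rightarrow> bool) \<Rightarrow> ('a \<Rightarrow> bool) \<Rightarrow> 'a \<Rightarrow> 'a \<Rightarrow> 'a \<Rightarrow> bool" where
  "rel E U r a b \<longleftrightarrow> (\<exists>p. E p r \<and> is_opair E U p a b)"

definition is_empty :: "('a \<Rightarrow> 'a \<Rightarrow> bool) \<Rightarrow> ('a \<Rightarrow> bool) \<Rightarrow> 'a \<Rightarrow> bool" where
  "is_empty E U x \<longleftrightarrow> isSet U x \<and> (\<forall>z. \<not> E z x)"

definition is_succ :: "('a \<Rightarrow> 'a \<Rightarrow> bool) \<Rightarrow> ('a \<Rightarrow> bool) \<Rightarrow> 'a \<Rightarrow> 'a \<Rightarrow> bool" where
  "is_succ E U s y \<longleftrightarrow> isSet U s \<and> (\<forall>z. E z s \<longleftrightarrow> E z y \<or> z = y)"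

definition wellorders :: "('a \<Rightarrow> 'a \<Rightarrow> bool) \<Rightarrow> ('a \<Rightarrow> bool) \<Rightarrow> 'a \<Rightarrow> 'a \<Rightarrow> bool" where
  "wellorders E U r x \<longleftrightarrow> isSet U r
     \<and> (\<forall>p. E p r \<longrightarrow> (\<exists>a b. E a x \<and> E b x \<and> is_opair E U p a b))
     \<and> (\<forall>a. E a x \<longrightarrow> \<not> rel E U r a a)
     \<and> (\<forall>a b c. E a x \<and> E b x \<and> E c x \<and> rel E U r a b \<and> rel E U r b c \<longrightarrow> rel E U r a c)
     \<and> (\<forall>a b. E a x \<and> E b x \<longrightarrow> rel E U r a b \<or> a = b \<or> rel E U r b a)
     \<and> (\<forall>y. isSet U y \<and> (\<forall>z. E z y \<longrightarrow> E z x) \<and> (\<exists>z. E z y) \<longrightarrow>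
            (\<exists>m. E m y \<and> (\<forall>z. E z y \<longrightarrow> \<not> rel E U r z m)))"

text \<open>The axioms of ZFCU_R (ZFC with urelements, Replacement instead of Collection, AC
in the form "every set is well-orderable").\<close>
definition ZFCU_R :: "('a \<Rightarrow> 'a \<Rightarrow> bool) \<Rightarrow> ('a \<Rightarrow> bool) \<Rightarrow> bool" where
  "ZFCU_R E U \<longleftrightarrow>
     \<comment> \<open>urelements have no members\<close>
     (\<forall>x z. U x \<longrightarrow> \<not> E z x)
     \<comment> \<open>extensionality for sets\<close>
   \<and> (\<forall>x y. isSet U x \<and> isSet U y \<and> (\<forall>z. E z x \<longleftrightarrow> E z y) \<longrightarrow> x = y)
     \<comment> \<open>foundation\<close>
   \<and> (\<forall>x. (\<exists>y. E y x) \<longrightarrow> (\<exists>y. E y x \<and> \<not> (\<exists>z. E z x \<and> E z y)))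
     \<comment> \<open>pairing\<close>
   \<and> (\<forall>a b. \<exists>y. is_upair E U y a b)
     \<comment> \<open>union\<close>
   \<and> (\<forall>x. \<exists>y. isSet U y \<and> (\<forall>z. E z y \<longleftrightarrow> (\<exists>w. E w x \<and> E z w)))
     \<comment> \<open>power set\<close>
   \<and> (\<forall>x. isSet U x \<longrightarrow> (\<exists>y. isSet U y \<and>
           (\<forall>z. E z y \<longleftrightarrow> isSet U z \<and> (\<forall>w. E w z \<longrightarrow> E w x))))
     \<comment> \<open>infinity\<close>
   \<and> (\<exists>x. isSet U x \<and> (\<exists>e. E e x \<and> is_empty E U e)
           \<and> (\<forall>y. E y x \<longrightarrow> (\<exists>y'. E y' x \<and> is_succ E U y' y)))
     \<comment> \<open>separation scheme\<close>
   \<and> (\<forall>\<phi> s x. isSet U x \<longrightarrow> (\<exists>y. isSet U y \<and>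
           (\<forall>z. E z y \<longleftrightarrow> E z x \<and> sat E U (case_nat z s) \<phi>)))
     \<comment> \<open>replacement scheme\<close>
   \<and> (\<forall>\<phi> s x. isSet U x \<longrightarrow>
           (\<forall>a. E a x \<longrightarrow> (\<exists>!b. sat E U (case_nat a (case_nat b s)) \<phi>)) \<longrightarrow>
           (\<exists>y. isSet U y \<and> (\<forall>b. E b y \<longleftrightarrow> (\<exists>a. E a x \<and> sat E U (case_nat a (case_nat b s)) \<phi>))))
     \<comment> \<open>choice: every set is well-orderable\<close>
   \<and> (\<forall>x. isSet U x \<longrightarrow> (\<exists>r. wellorders E U r x))"

definition transitive_set :: "('a \<Rightarrow> 'a \<Rightarrow> bool) \<Rightarrow> ('a \<Rightarrow> bool) \<Rightarrow> 'a \<Rightarrow> bool" where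
  "transitive_set E U x \<longleftrightarrow> isSet U x \<and> (\<forall>y z. E y x \<and> E z y \<longrightarrow> E z x)"

text \<open>von Neumann ordinal (in the presence of foundation): transitive set of transitive sets.\<close>
definition is_ordinal :: "('a \<Rightarrow> 'a \<Rightarrow> bool) \<Rightarrow> ('a \<Rightarrow> bool) \<Rightarrow> 'a \<Rightarrow> bool" where
  "is_ordinal E U x \<longleftrightarrow> transitive_set E U x \<and> (\<forall>y. E y x \<longrightarrow> transitive_set E U y)"

definition is_function :: "('a \<Rightarrow> 'a \<Rightarrow> bool) \<Rightarrow> ('a \<Rightarrow> bool) \<Rightarrow> 'a \<Rightarrow> bool" where
  "is_function E U f \<longleftrightarrow> isSet U f
     \<and> (\<forall>p. E p f \<longrightarrow> (\<exists>a b. is_opair E U p a b))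
     \<and> (\<forall>a b c. rel E U f a b \<and> rel E U f a c \<longrightarrow> b = c)"

definition has_domain :: "('a \<Rightarrow> 'a \<Rightarrow> bool) \<Rightarrow> ('a \<Rightarrow> bool) \<Rightarrow> 'a \<Rightarrow> 'a \<Rightarrow> bool" where
  "has_domain E U f d \<longleftrightarrow> (\<forall>a. E a d \<longleftrightarrow> (\<exists>b. rel E U f a b))"

definition is_restriction :: "('a \<Rightarrow> 'a \<Rightarrow> bool) \<Rightarrow> ('a \<Rightarrow> bool) \<Rightarrow> 'a \<Rightarrow> 'a \<Rightarrow> 'a \<Rightarrow> bool" where
  "is_restriction E U g f a \<longleftrightarrow> isSet U g \<and>
     (\<forall>p. E p g \<longleftrightarrow> E p f \<and> (\<exists>c d. is_opair E U p c d \<and> E c a))"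

definition equinumerous :: "('a \<Rightarrow> 'a \<Rightarrow> bool) \<Rightarrow> ('a \<Rightarrow> bool) \<Rightarrow> 'a \<Rightarrow> 'a \<Rightarrow> bool" where
  "equinumerous E U x y \<longleftrightarrow> (\<exists>f. isSet U f
     \<and> (\<forall>p. E p f \<longrightarrow> (\<exists>a b. E a x \<and> E b y \<and> is_opair E U p a b))
     \<and> (\<forall>a. E a x \<longrightarrow> (\<exists>!b. rel E U f a b))
     \<and> (\<forall>b. E b y \<longrightarrow> (\<exists>!a. rel E U f a b)))"

definition is_cardinal :: "('a \<Rightarrow> 'a \<Rightarrow> bool) \<Rightarrow> ('a \<Rightarrow> bool) \<Rightarrow> 'a \<Rightarrow> bool" where
  "is_cardinal E U k \<longleftrightarrow> is_ordinal E U k \<and> (\<forall>a. E a k \<longrightarrow> \<not> equinumerous E U a k)"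

definition is_nat :: "('a \<Rightarrow> 'a \<Rightarrow> bool) \<Rightarrow> ('a \<Rightarrow> bool) \<Rightarrow> 'a \<Rightarrow> bool" where
  "is_nat E U n \<longleftrightarrow> is_ordinal E U n \<and>
     (\<forall>m. m = n \<or> E m n \<longrightarrow> is_empty E U m \<or> (\<exists>k. is_succ E U m k))"

definition infinite_cardinal :: "('a \<Rightarrow> 'a \<Rightarrow> bool) \<Rightarrow> ('a \<Rightarrow> bool) \<Rightarrow> 'a \<Rightarrow> bool" where
  "infinite_cardinal E U k \<longleftrightarrow> is_cardinal E U k \<and> \<not> is_nat E U k"

definition urelements_proper_class :: "('a \<Rightarrow> 'a \<Rightarrow> bool) \<Rightarrow> ('a \<Rightarrow> bool) \<Rightarrow> bool" where
  "urelements_proper_class E U \<longleftrightarrow> \<not> (\<exists>y. isSet U y \<and> (\<forall>z. E z y \<longleftrightarrow> U z))"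

definition realized :: "('a \<Rightarrow> 'a \<Rightarrow> bool) \<Rightarrow> ('a \<Rightarrow> bool) \<Rightarrow> 'a \<Rightarrow> bool" where
  "realized E U x \<longleftrightarrow> (\<exists>y. isSet U y \<and> (\<forall>z. E z y \<longrightarrow> U z) \<and> equinumerous E U x y)"

text \<open>DC_kappa scheme: variable 0 is x, variable 1 is y, the remaining variables are the
parameters (given by s).\<close>
definition DC_scheme :: "('a \<Rightarrow> 'a \<Rightarrow> bool) \<Rightarrow> ('a \<Rightarrow> bool) \<Rightarrow> 'a \<Rightarrow> bool" where
  "DC_scheme E U k \<longleftrightarrow> (\<forall>\<phi> s.
     (\<forall>x. \<exists>y. sat E U (case_nat x (case_nat y s)) \<phi>) \<longrightarrow>
     (\<exists>f. is_function E U f \<and> has_domain E U f k \<and>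
        (\<forall>\<alpha>. E \<alpha> k \<longrightarrow> (\<exists>g v. is_restriction E U g f \<alpha> \<and> rel E U f \<alpha> v
               \<and> sat E U (case_nat g (case_nat v s)) \<phi>))))"

end

theory Submission
  imports Defs
begin

(* Apply DC_kappa to the relation "y is an urelement that does not occur as a component of a
   pair in x".  Since the urelements form a proper class, the urelements of the set \<Union>\<Union>x do not
   exhaust them, so the relation is total.  DC yields f on \<kappa> with f(\<alpha>) \<notin> f``\<alpha> for all
   \<alpha> < \<kappa>, i.e. an injection of \<kappa> into the urelements, whose range (the urelements of \<Union>\<Union>f)
   is a set. *)

lemma ZFCU_R_extensionality:
  assumes "ZFCU_R E U" "isSet U x" "isSet U y" "\<And>z. E z x \<longleftrightarrow> E z y"
  shows "x = y"
proof -
  have "\<forall>x y. isSet U x \<and> isSet U y \<and> (\<forall>z. E z x \<longleftrightarrow> E z y) \<longrightarrow> x = y"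
    using assms(1) unfolding ZFCU_R_def by (elim conjE) assumption
  with assms(2-) show ?thesis
    by blast
qed

lemma ZFCU_R_foundation:
  assumes "ZFCU_R E U" "E y x"
  obtains m where "E m x" "\<And>z. E z m \<Longrightarrow> \<not> E z x"
proof -
  have "\<forall>x. (\<exists>y. E y x) \<longrightarrow> (\<exists>y. E y x \<and> \<not> (\<exists>z. E z x \<and> E z y))"
    using assms(1) unfolding ZFCU_R_def by (elim conjE) assumption
  with assms(2) that show thesis
    by blast
qed

lemma ZFCU_R_pairing:
  assumes "ZFCU_R E U"
  obtains y where "is_upair E U y a b"
proof -
  have "\<forall>a b. \<exists>y. is_upair E U y a b"
    using assms unfolding ZFCU_R_def by (elim conjE) assumption
  with that show thesis
    by blast
qed

lemma ZFCU_R_union: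
  assumes "ZFCU_R E U"
  obtains y where "isSet U y" "\<And>z. E z y \<longleftrightarrow> (\<exists>w. E w x \<and> E z w)"
proof -
  have "\<forall>x. \<exists>y. isSet U y \<and> (\<forall>z. E z y \<longleftrightarrow> (\<exists>w. E w x \<and> E z w))"
    using assms unfolding ZFCU_R_def by (elim conjE) assumption
  with that show thesis
    by blast
qed

lemma ZFCU_R_separation:
  assumes "ZFCU_R E U" "isSet U x"
  obtains y where "isSet U y" "\<And>z. E z y \<longleftrightarrow> E z x \<and> sat E U (case_nat z s) \<phi>"
proof -
  have "\<forall>\<phi> s x. isSet U x \<longrightarrow>
      (\<exists>y. isSet U y \<and> (\<forall>z. E z y \<longleftrightarrow> E z x \<and> sat E U (case_nat z s) \<phi>))"
    using assms(1) unfolding ZFCU_R_def by (elim conjE) assumption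
  with assms(2) that show thesis
    by blast
qed

lemma ZFCU_R_urelements_of_union_union:
  assumes "ZFCU_R E U"
  obtains y where "isSet U y" "\<And>z. E z y \<longleftrightarrow> U z \<and> (\<exists>p q. E p x \<and> E q p \<and> E z q)"
proof -
  obtain w where w: "\<And>z. E z w \<longleftrightarrow> (\<exists>p. E p x \<and> E z p)"
    using ZFCU_R_union[OF assms, where x = x] by blast
  obtain v where v: "isSet U v" "\<And>z. E z v \<longleftrightarrow> (\<exists>q. E q w \<and> E z q)"
    using ZFCU_R_union[OF assms, where x = w] by blast
  obtain y where "isSet U y" "\<And>z. E z y \<longleftrightarrow> E z v \<and> sat E U (case_nat z s) (Ur 0)"
    using ZFCU_R_separation[OF assms v(1)] by blast
  with v(2) w show thesis
    by (intro that[of y]) auto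
qed

lemma fresh_urelement:
  assumes "ZFCU_R E U" "urelements_proper_class E U"
  obtains u where "U u" "\<not> (\<exists>p q. E p x \<and> E q p \<and> E u q)"
proof -
  obtain y where y: "isSet U y" "\<And>z. E z y \<longleftrightarrow> U z \<and> (\<exists>p q. E p x \<and> E q p \<and> E z q)"
    using ZFCU_R_urelements_of_union_union[OF assms(1), where x = x] by blast
  from assms(2) y(1) obtain u where "\<not> (E u y \<longleftrightarrow> U u)"
    unfolding urelements_proper_class_def by blast
  with y(2) show thesis
    by (intro that[of u]) auto
qed

lemma opair_snd_mem_mem:
  assumes "ZFCU_R E U" "is_opair E U p a b"
  obtains q where "E q p" "E b q"
proof -
  obtain q where "is_upair E U q a b"
    using ZFCU_R_pairing[OF assms(1)] .
  with assms(2) show thesis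
    unfolding is_opair_def is_upair_def by (metis that)
qed

lemma mem_mem_opair:
  "is_opair E U p a b \<Longrightarrow> E q p \<Longrightarrow> E z q \<Longrightarrow> z = a \<or> z = b"
  unfolding is_opair_def is_upair_def by blast

lemma ordinal_mem_trans: "is_ordinal E U k \<Longrightarrow> E x k \<Longrightarrow> E y x \<Longrightarrow> E y k"
  unfolding is_ordinal_def transitive_set_def by blast

lemma ordinal_mem_not_urelement: "is_ordinal E U k \<Longrightarrow> E x k \<Longrightarrow> \<not> U x"
  unfolding is_ordinal_def transitive_set_def isSet_def by blast

definition incomparable_fm :: "nat \<Rightarrow> nat \<Rightarrow> fm" where
  "incomparable_fm i j = Conj (Neg (Mem i j)) (Conj (Neg (Equ i j)) (Neg (Mem j i)))"

lemma sat_incomparable_fm [simp]: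
  "sat E U s (incomparable_fm i j) \<longleftrightarrow> \<not> E (s i) (s j) \<and> s i \<noteq> s j \<and> \<not> E (s j) (s i)"
  by (simp add: incomparable_fm_def)

lemma incomparable_transitive_sets_eq:
  assumes "ZFCU_R E U" "transitive_set E U a" "transitive_set E U b"
    and "\<not> E a b" "\<not> E b a"
    and "\<And>z. E z a \<Longrightarrow> E z b \<or> z = b \<or> E b z"
    and "\<And>z. E z b \<Longrightarrow> E a z \<or> a = z \<or> E z a"
  shows "a = b"
  using assms(2-) unfolding transitive_set_def
  by (intro ZFCU_R_extensionality[OF assms(1)]) blast+

lemma ordinal_trichotomy:
  assumes Z: "ZFCU_R E U" and k: "is_ordinal E U k" and "E a k" "E b k"
  shows "E a b \<or> a = b \<or> E b a"
proof (rule ccontr)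
  assume incomparable: "\<not> (E a b \<or> a = b \<or> E b a)"
  have "isSet U k"
    using k unfolding is_ordinal_def transitive_set_def by blast
  obtain X where X_sat: "\<And>z. E z X \<longleftrightarrow>
      E z k \<and> sat E U (case_nat z (\<lambda>_. k)) (Ex (Conj (Mem 0 2) (incomparable_fm 1 0)))"
    using ZFCU_R_separation[OF Z \<open>isSet U k\<close>] by blast
  have X: "E z X \<longleftrightarrow> E z k \<and> (\<exists>y. E y k \<and> \<not> (E z y \<or> z = y \<or> E y z))" for z
    using X_sat by simp
  have "E a X"
    using X \<open>E a k\<close> \<open>E b k\<close> incomparable by blast
  then obtain a0 where "E a0 X" and a0_min: "\<And>z. E z a0 \<Longrightarrow> \<not> E z X"
    using ZFCU_R_foundation[OF Z] by metis
  obtain Y where Y_sat: "\<And>z. E z Y \<longleftrightarrow> E z k \<and> sat E U (case_nat z (\<lambda>_. a0)) (incomparable_fm 1 0)"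
    using ZFCU_R_separation[OF Z \<open>isSet U k\<close>] by blast
  have Y: "E z Y \<longleftrightarrow> E z k \<and> \<not> (E a0 z \<or> a0 = z \<or> E z a0)" for z
    using Y_sat by simp
  from \<open>E a0 X\<close> obtain c where "E c Y"
    using X Y by blast
  then obtain b0 where "E b0 Y" and b0_min: "\<And>z. E z b0 \<Longrightarrow> \<not> E z Y"
    using ZFCU_R_foundation[OF Z] by metis
  have "E a0 k" "E b0 k"
    using \<open>E a0 X\<close> \<open>E b0 Y\<close> X Y by auto
  have "a0 = b0"
  proof (rule incomparable_transitive_sets_eq[OF Z])
    show "transitive_set E U a0" "transitive_set E U b0"
      using k \<open>E a0 k\<close> \<open>E b0 k\<close> unfolding is_ordinal_def by blast+
    show "\<not> E a0 b0" "\<not> E b0 a0"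
      using \<open>E b0 Y\<close> Y by blast+
    show "E z b0 \<or> z = b0 \<or> E b0 z" if "E z a0" for z
      using a0_min[OF that] X ordinal_mem_trans[OF k \<open>E a0 k\<close> that] \<open>E b0 k\<close> by blast
    show "E a0 z \<or> a0 = z \<or> E z a0" if "E z b0" for z
      using b0_min[OF that] Y ordinal_mem_trans[OF k \<open>E b0 k\<close> that] by blast
  qed
  with \<open>E b0 Y\<close> Y show False
    by blast
qed

definition fun_value :: "('a \<Rightarrow> 'a \<Rightarrow> bool) \<Rightarrow> ('a \<Rightarrow> bool) \<Rightarrow> 'a \<Rightarrow> 'a \<Rightarrow> 'a" where
  "fun_value E U f a = (THE b. rel E U f a b)"

lemma fun_value_eqI: "is_function E U f \<Longrightarrow> rel E U f a b \<Longrightarrow> fun_value E U f a = b"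
  unfolding fun_value_def is_function_def by blast

lemma rel_fun_value:
  assumes "is_function E U f" "has_domain E U f d" "E a d"
  shows "rel E U f a (fun_value E U f a)"
  using assms fun_value_eqI unfolding has_domain_def by metis

lemma fun_value_mem_mem:
  assumes "ZFCU_R E U" "is_function E U f" "has_domain E U f d" "E a d"
  obtains p q where "E p f" "is_opair E U p a (fun_value E U f a)" "E q p" "E (fun_value E U f a) q"
proof -
  obtain p where "E p f" "is_opair E U p a (fun_value E U f a)"
    using rel_fun_value[OF assms(2-)] unfolding rel_def by blast
  moreover obtain q where "E q p" "E (fun_value E U f a) q"
    using opair_snd_mem_mem[OF assms(1) calculation(2)] .
  ultimately show thesis
    by (rule that)
qed

lemma urelement_range_exists:
  assumes Z: "ZFCU_R E U" and f: "is_function E U f" "has_domain E U f d"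
    and "\<And>a. E a d \<Longrightarrow> \<not> U a" and "\<And>a. E a d \<Longrightarrow> U (fun_value E U f a)"
  obtains R where "isSet U R" "\<And>z. E z R \<longleftrightarrow> (\<exists>a. E a d \<and> z = fun_value E U f a)"
proof -
  obtain R where R: "isSet U R" "\<And>z. E z R \<longleftrightarrow> U z \<and> (\<exists>p q. E p f \<and> E q p \<and> E z q)"
    using ZFCU_R_urelements_of_union_union[OF Z, where x = f] by blast
  have "E z R \<longleftrightarrow> (\<exists>a. E a d \<and> z = fun_value E U f a)" for z
  proof
    assume "E z R"
    then obtain p q where "U z" "E p f" "E q p" "E z q"
      using R(2) by blast
    from \<open>E p f\<close> f(1) obtain a b where ab: "is_opair E U p a b"
      unfolding is_function_def by blast
    with \<open>E p f\<close> have "rel E U f a b"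
      unfolding rel_def by blast
    then have "E a d" "b = fun_value E U f a"
      using f(2) fun_value_eqI[OF f(1)] unfolding has_domain_def by auto
    moreover have "z = a \<or> z = b"
      using mem_mem_opair[OF ab \<open>E q p\<close> \<open>E z q\<close>] .
    ultimately show "\<exists>a. E a d \<and> z = fun_value E U f a"
      using \<open>U z\<close> assms(4) by blast
  next
    assume "\<exists>a. E a d \<and> z = fun_value E U f a"
    then obtain a where "E a d" "z = fun_value E U f a"
      by blast
    moreover obtain p q where "E p f" "E q p" "E (fun_value E U f a) q"
      using fun_value_mem_mem[OF Z f \<open>E a d\<close>] by blast
    ultimately show "E z R"
      using R(2) assms(5) by blast
  qed
  with R(1) show thesis
    by (rule that)
qed

lemma equinumerous_of_injective_function:
  assumes f: "is_function E U f" "has_domain E U f d"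
    and inj: "\<And>a b. E a d \<Longrightarrow> E b d \<Longrightarrow> fun_value E U f a = fun_value E U f b \<Longrightarrow> a = b"
    and R: "\<And>z. E z R \<longleftrightarrow> (\<exists>a. E a d \<and> z = fun_value E U f a)"
  shows "equinumerous E U d R"
proof -
  have graph: "rel E U f a b \<longleftrightarrow> E a d \<and> b = fun_value E U f a" for a b
  proof
    assume "rel E U f a b"
    then show "E a d \<and> b = fun_value E U f a"
      using f(2) fun_value_eqI[OF f(1)] unfolding has_domain_def by auto
  next
    assume "E a d \<and> b = fun_value E U f a"
    then show "rel E U f a b"
      using rel_fun_value[OF f] by blast
  qed
  show ?thesis
    unfolding equinumerous_def
  proof (rule exI[of _ f], intro conjI allI impI)
    show "isSet U f"
      using f(1) unfolding is_function_def by blast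
  next
    fix p
    assume "E p f"
    with f(1) obtain a b where "is_opair E U p a b"
      unfolding is_function_def by blast
    with \<open>E p f\<close> graph R show "\<exists>a b. E a d \<and> E b R \<and> is_opair E U p a b"
      unfolding rel_def by blast
  next
    fix a
    assume "E a d"
    with graph show "\<exists>!b. rel E U f a b"
      by simp
  next
    fix b
    assume "E b R"
    then obtain a where "E a d" "b = fun_value E U f a"
      using R by blast
    with inj graph show "\<exists>!a. rel E U f a b"
      by (intro ex1I[of _ a]) auto
  qed
qed

definition fresh_urelement_fm :: fm where
  "fresh_urelement_fm = Conj (Ur 1) (Neg (Ex (Conj (Mem 0 1) (Ex (Conj (Mem 0 1) (Mem 3 0))))))"

lemma sat_fresh_urelement_fm:
  "sat E U (case_nat x (case_nat y s)) fresh_urelement_fm \<longleftrightarrow>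
     U y \<and> \<not> (\<exists>p q. E p x \<and> E q p \<and> E y q)"
  by (simp add: fresh_urelement_fm_def)

lemma fresh_urelement_fm_total:
  assumes "ZFCU_R E U" "urelements_proper_class E U"
  shows "\<exists>y. sat E U (case_nat x (case_nat y s)) fresh_urelement_fm"
proof -
  obtain u where "U u" "\<not> (\<exists>p q. E p x \<and> E q p \<and> E u q)"
    using fresh_urelement[OF assms, where x = x] by blast
  then show ?thesis
    unfolding sat_fresh_urelement_fm by blast
qed

lemma DC_scheme_injective_urelement_sequence:
  assumes Z: "ZFCU_R E U" and "urelements_proper_class E U" and "DC_scheme E U \<kappa>"
    and \<kappa>: "transitive_set E U \<kappa>"
  obtains f where "is_function E U f" "has_domain E U f \<kappa>"
    "\<And>\<alpha>. E \<alpha> \<kappa> \<Longrightarrow> U (fun_value E U f \<alpha>)"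
    "\<And>\<alpha> \<beta>. E \<alpha> \<kappa> \<Longrightarrow> E \<beta> \<alpha> \<Longrightarrow> fun_value E U f \<beta> \<noteq> fun_value E U f \<alpha>"
proof -
  have "\<forall>x. \<exists>y. sat E U (case_nat x (case_nat y (\<lambda>_. \<kappa>))) fresh_urelement_fm"
    using fresh_urelement_fm_total[OF assms(1,2)] by blast
  then obtain f where f: "is_function E U f" "has_domain E U f \<kappa>"
    and step: "\<forall>\<alpha>. E \<alpha> \<kappa> \<longrightarrow> (\<exists>g v. is_restriction E U g f \<alpha> \<and> rel E U f \<alpha> v
               \<and> sat E U (case_nat g (case_nat v (\<lambda>_. \<kappa>))) fresh_urelement_fm)"
    using assms(3)[unfolded DC_scheme_def, rule_format] by blast
  have fresh: "U (fun_value E U f \<alpha>) \<and> (\<forall>\<beta>. E \<beta> \<alpha> \<longrightarrow> fun_value E U f \<beta> \<noteq> fun_value E U f \<alpha>)"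
    if \<alpha>: "E \<alpha> \<kappa>" for \<alpha>
  proof -
    obtain g v where g: "is_restriction E U g f \<alpha>" "rel E U f \<alpha> v"
      and v: "sat E U (case_nat g (case_nat v (\<lambda>_. \<kappa>))) fresh_urelement_fm"
      using step \<alpha> by blast
    have "v = fun_value E U f \<alpha>"
      using fun_value_eqI[OF f(1) g(2)] by simp
    with v have "U (fun_value E U f \<alpha>)"
      and v_fresh: "\<not> (\<exists>p q. E p g \<and> E q p \<and> E (fun_value E U f \<alpha>) q)"
      unfolding sat_fresh_urelement_fm by simp_all
    moreover have "fun_value E U f \<beta> \<noteq> fun_value E U f \<alpha>" if "E \<beta> \<alpha>" for \<beta>
    proof -
      have "E \<beta> \<kappa>"
        using \<kappa> \<open>E \<alpha> \<kappa>\<close> that unfolding transitive_set_def by blast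
      then obtain p q where "E p f" and p: "is_opair E U p \<beta> (fun_value E U f \<beta>)"
        and "E q p" "E (fun_value E U f \<beta>) q"
        using fun_value_mem_mem[OF Z f] by blast
      moreover have "E p g"
        using g(1) \<open>E p f\<close> p that unfolding is_restriction_def by blast
      ultimately show ?thesis
        using v_fresh by metis
    qed
    ultimately show ?thesis
      by blast
  qed
  show thesis
    using f fresh by (intro that) auto
qed

lemma realized_of_injective_urelement_sequence:
  assumes Z: "ZFCU_R E U" and \<kappa>: "is_ordinal E U \<kappa>"
    and f: "is_function E U f" "has_domain E U f \<kappa>"
    and urelement: "\<And>\<alpha>. E \<alpha> \<kappa> \<Longrightarrow> U (fun_value E U f \<alpha>)"
    and distinct: "\<And>\<alpha> \<beta>. E \<alpha> \<kappa> \<Longrightarrow> E \<beta> \<alpha> \<Longrightarrow> fun_value E U f \<beta> \<noteq> fun_value E U f \<alpha>"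
  shows "realized E U \<kappa>"
proof -
  obtain R where R: "isSet U R" "\<And>z. E z R \<longleftrightarrow> (\<exists>\<alpha>. E \<alpha> \<kappa> \<and> z = fun_value E U f \<alpha>)"
    using urelement_range_exists[OF Z f ordinal_mem_not_urelement[OF \<kappa>] urelement] by blast
  have "equinumerous E U \<kappa> R"
    using equinumerous_of_injective_function[OF f _ R(2)] ordinal_trichotomy[OF Z \<kappa>] distinct
    by metis
  moreover have "\<forall>z. E z R \<longrightarrow> U z"
    using R(2) urelement by auto
  ultimately show ?thesis
    using R(1) unfolding realized_def by blast
qed

theorem mainTheorem6:
  fixes E :: "'a \<Rightarrow> 'a \<Rightarrow> bool" and U :: "'a \<Rightarrow> bool" and \<kappa> :: 'a
  assumes "ZFCU_R E U"
    and "infinite_cardinal E U \<kappa>"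
    and "DC_scheme E U \<kappa>"
    and "urelements_proper_class E U"
  shows "realized E U \<kappa>"
proof -
  have \<kappa>: "is_ordinal E U \<kappa>"
    using assms(2) unfolding infinite_cardinal_def is_cardinal_def by blast
  then have "transitive_set E U \<kappa>"
    unfolding is_ordinal_def by blast
  obtain f where "is_function E U f" "has_domain E U f \<kappa>"
    "\<And>\<alpha>. E \<alpha> \<kappa> \<Longrightarrow> U (fun_value E U f \<alpha>)"
    "\<And>\<alpha> \<beta>. E \<alpha> \<kappa> \<Longrightarrow> E \<beta> \<alpha> \<Longrightarrow> fun_value E U f \<beta> \<noteq> fun_value E U f \<alpha>"
    using DC_scheme_injective_urelement_sequence[OF assms(1,4,3) \<open>transitive_set E U \<kappa>\<close>] by blast
  then show ?thesis
    using realized_of_injective_urelement_sequence[OF assms(1) \<kappa>] by blast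
qed

end
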